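(* Let $n\ge 0$ be an integer and for $k\in\mathbb{Z}_+$ let $v_k(t)=c_k\,e^{-\frac{t^{2n+2}}{2n+2}}L^{(-\frac{1}{2n+2})}_{k}\!\left(\frac{t^{2n+2}}{n+1}\right)$ with $c_k>0$ chosen so that $\|t^nv_k\|_{L^2(\mathbb{R})}=1$, and let $v_k(z)$, $z\in\mathbb{C}$, denote its entire extension. Then $v_k(z)$ is an entire function of order $2n+2$ and of finite type, and there are constants $c_1>0$ and $C>0$, independent of $k$, such that $$|v_k(z)|\le C^{\,k+1}e^{c_1|z|^{2n+2}}\qquad\text{for all }z\in\mathbb{C},\ k\in\mathbb{Z}_+.$$
   Context: $L^{(a)}_k$ denotes the generalized Laguerre polynomial of degree $k$ and parameter $a$. An entire function $f$ has finite order if there are $C,a>0$ with $|f(z)|\le e^{|z|^{a}}$ for $|z|\ge C$; its order is the infimum of such $a$. *)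

theory Defs
  imports "HOL-Analysis.Analysis"
begin

definition gen_laguerre :: "nat \<Rightarrow> real \<Rightarrow> complex \<Rightarrow> complex" where
  "gen_laguerre k a x =
     (\<Sum>i\<le>k. complex_of_real ((-1) ^ i * ((real k + a) gchoose (k - i)) / fact i) * x ^ i)"

definition vfun :: "nat \<Rightarrow> (nat \<Rightarrow> real) \<Rightarrow> nat \<Rightarrow> complex \<Rightarrow> complex" where
  "vfun n c k z =
     complex_of_real (c k) * exp (- (z ^ (2*n+2)) / of_nat (2*n+2))
       * gen_laguerre k (- 1 / real (2*n+2)) (z ^ (2*n+2) / of_nat (n+1))"

definition order_exponents :: "(complex \<Rightarrow> complex) \<Rightarrow> real set" where
  "order_exponents f = {a. a > 0 \<and> (\<exists>C>0. \<forall>z. norm z \<ge> C \<longrightarrow> norm (f z) \<le> exp (norm z powr a))}"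

definition has_finite_order :: "(complex \<Rightarrow> complex) \<Rightarrow> bool" where
  "has_finite_order f \<longleftrightarrow> order_exponents f \<noteq> {}"

definition entire_order :: "(complex \<Rightarrow> complex) \<Rightarrow> real" where
  "entire_order f = Inf (order_exponents f)"

text \<open>Finite type with respect to order \<rho>: limsup_{r\<rightarrow>\<infinity>} log M(r) / r^\<rho> < \<infinity>, i.e.
  |f z| \<le> exp(A |z|^\<rho>) for all sufficiently large |z|, for some A.\<close>
definition has_finite_type :: "(complex \<Rightarrow> complex) \<Rightarrow> real \<Rightarrow> bool" where
  "has_finite_type f \<rho> \<longleftrightarrow>
     (\<exists>A C. \<forall>z. norm z \<ge> C \<longrightarrow> norm (f z) \<le> exp (A * norm z powr \<rho>))"

end

theory Submission
  imports Defs
begin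

text \<open>With \<open>a = -1/(2n+2)\<close>, every coefficient \<open>binom(k+a, j)\<close> of the explicit
  Laguerre sum lies in \<open>(0, 2^k]\<close>, so termwise estimation gives
  \<open>|v_k(z)| \<le> c_k 2^k exp(2|z|^(2n+2))\<close>. On the ray \<open>arg z = \<pi>/(2n+2)\<close> the argument of the
  Laguerre polynomial is negative, all terms of the sum are nonnegative and the Gaussian factor
  equals \<open>exp(|z|^(2n+2)/(2n+2))\<close>; together the two estimates pin the order down to \<open>2n+2\<close>.
  For the uniform bound, near 0 the Laguerre factor stays within \<open>2^-(k+1)\<close> of its value
  \<open>binom(k+a, k) \<ge> 2^-k\<close> on an interval of length about \<open>8^-k\<close>, so the normalisation
  forces \<open>c_k\<close> to grow at most geometrically in \<open>k\<close>.\<close>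

section \<open>Order and type of entire functions from growth bounds\<close>

lemma eventually_le_powr_at_top:
  fixes L B p q :: real
  assumes "p < q" "0 < q"
  shows "eventually (\<lambda>r. L + B * r powr p \<le> r powr q) at_top"
proof -
  have "((\<lambda>r. L * r powr (- q) + B * r powr (p - q)) \<longlongrightarrow> 0) at_top"
    using assms by (intro tendsto_add_zero tendsto_mult_right_zero tendsto_neg_powr filterlim_ident) auto
  then have "eventually (\<lambda>r. L * r powr (- q) + B * r powr (p - q) < 1) at_top"
    by (rule order_tendstoD) simp
  moreover have "eventually (\<lambda>r::real. 0 < r) at_top"
    by (rule eventually_gt_at_top)
  ultimately show ?thesis
  proof eventually_elim
    case (elim r)
    have "L + B * r powr p = (L * r powr (- q) + B * r powr (p - q)) * r powr q"
      using elim(2) by (simp add: algebra_simps flip: powr_add)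
    also have "\<dots> \<le> 1 * r powr q"
      using elim(1) by (intro mult_right_mono) auto
    finally show ?case by simp
  qed
qed

lemma mem_order_exponentsI:
  assumes "0 < \<rho>" "\<rho> < a" "0 < K" and upper: "\<And>z. norm (f z) \<le> K * exp (B * norm z powr \<rho>)"
  shows "a \<in> order_exponents f"
proof -
  obtain R where R: "\<And>r. r \<ge> R \<Longrightarrow> ln K + B * r powr \<rho> \<le> r powr a"
    using eventually_le_powr_at_top[OF assms(2), of "ln K" B] assms(1,2)
    unfolding eventually_at_top_linorder by auto
  have "norm (f z) \<le> exp (norm z powr a)" if "max R 1 \<le> norm z" for z
  proof -
    have "norm (f z) \<le> exp (ln K + B * norm z powr \<rho>)"
      using upper[of z] \<open>0 < K\<close> by (simp add: exp_add)
    also have "\<dots> \<le> exp (norm z powr a)"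
      using R[of "norm z"] that by simp
    finally show ?thesis .
  qed
  then show ?thesis
    using assms(1,2) unfolding order_exponents_def by (intro CollectI conjI exI[of _ "max R 1"]) auto
qed

lemma growth_exponent_le_order_exponents:
  assumes "0 < \<beta>" "0 < b"
    and lower: "\<And>R. \<exists>z. R \<le> norm z \<and> \<beta> * exp (b * norm z powr \<rho>) \<le> norm (f z)"
    and a: "a \<in> order_exponents f"
  shows "\<rho> \<le> a"
proof (rule ccontr)
  assume "\<not> \<rho> \<le> a"
  moreover obtain C where "0 < a" and C: "\<And>z. C \<le> norm z \<Longrightarrow> norm (f z) \<le> exp (norm z powr a)"
    using a unfolding order_exponents_def by auto
  ultimately have "eventually (\<lambda>r. (1 - ln \<beta>) / b + 1 / b * r powr a \<le> r powr \<rho>) at_top"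
    by (intro eventually_le_powr_at_top) auto
  then obtain R where R: "\<And>r. r \<ge> R \<Longrightarrow> (1 - ln \<beta>) / b + 1 / b * r powr a \<le> r powr \<rho>"
    unfolding eventually_at_top_linorder by auto
  obtain z where z: "max R C \<le> norm z" "\<beta> * exp (b * norm z powr \<rho>) \<le> norm (f z)"
    using lower by blast
  have "(1 - ln \<beta> + norm z powr a) / b \<le> norm z powr \<rho>"
    using R[of "norm z"] z(1) by (simp add: add_divide_distrib)
  then have "1 - ln \<beta> + norm z powr a \<le> b * norm z powr \<rho>"
    using \<open>0 < b\<close> by (simp add: pos_divide_le_eq mult.commute)
  then have "exp (norm z powr a) < exp (ln \<beta> + b * norm z powr \<rho>)"
    by simp
  also have "\<dots> \<le> norm (f z)"
    using z(2) \<open>0 < \<beta>\<close> by (simp add: exp_add)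
  also have "\<dots> \<le> exp (norm z powr a)"
    using C z(1) by simp
  finally show False by simp
qed

lemma entire_order_eqI:
  assumes "\<And>a. \<rho> < a \<Longrightarrow> a \<in> order_exponents f" "\<And>a. a \<in> order_exponents f \<Longrightarrow> \<rho> \<le> a"
  shows "entire_order f = \<rho>"
  unfolding entire_order_def
proof (rule cInf_eq)
  fix y assume "\<And>a. a \<in> order_exponents f \<Longrightarrow> y \<le> a"
  then show "y \<le> \<rho>"
    using assms(1) by (blast intro: dense_ge)
qed (use assms(2) in blast)

lemma has_finite_typeI:
  assumes "0 \<le> \<rho>" "0 < K" "\<And>z. norm (f z) \<le> K * exp (B * norm z powr \<rho>)"
  shows "has_finite_type f \<rho>"
  unfolding has_finite_type_def
proof (intro exI allI impI)
  fix z :: complex assume z: "1 \<le> norm z"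
  then have r: "1 \<le> norm z powr \<rho>"
    using assms(1) by (simp add: ge_one_powr_ge_zero)
  have "norm (f z) \<le> exp (ln K + B * norm z powr \<rho>)"
    using assms(3)[of z] assms(2) by (simp add: exp_add)
  also have "ln K + B * norm z powr \<rho> \<le> (\<bar>ln K\<bar> + \<bar>B\<bar>) * norm z powr \<rho>"
  proof -
    have "ln K \<le> \<bar>ln K\<bar> * norm z powr \<rho>"
      using abs_ge_self[of "ln K"] mult_left_mono[OF r, of "\<bar>ln K\<bar>"] by simp
    moreover have "B * norm z powr \<rho> \<le> \<bar>B\<bar> * norm z powr \<rho>"
      by (intro mult_right_mono) auto
    ultimately show ?thesis by (simp add: distrib_right)
  qed
  finally show "norm (f z) \<le> exp ((\<bar>ln K\<bar> + \<bar>B\<bar>) * norm z powr \<rho>)"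
    by simp
qed

lemma order_and_type_of_growth_bounds:
  assumes "0 < \<rho>" "0 < K" and upper: "\<And>z. norm (f z) \<le> K * exp (B * norm z powr \<rho>)"
    and "0 < \<beta>" "0 < b"
    and lower: "\<And>R. \<exists>z. R \<le> norm z \<and> \<beta> * exp (b * norm z powr \<rho>) \<le> norm (f z)"
  shows "has_finite_order f \<and> entire_order f = \<rho> \<and> has_finite_type f \<rho>"
proof (intro conjI)
  have mem: "a \<in> order_exponents f" if "\<rho> < a" for a
    by (rule mem_order_exponentsI[OF assms(1) that assms(2) upper])
  then show "has_finite_order f"
    unfolding has_finite_order_def using gt_ex[of \<rho>] by blast
  show "entire_order f = \<rho>"
    using mem growth_exponent_le_order_exponents[OF assms(4,5) lower] by (rule entire_order_eqI)
  show "has_finite_type f \<rho>"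
    using assms(1) by (intro has_finite_typeI[OF _ assms(2) upper]) simp
qed

section \<open>Generalized Laguerre polynomials with parameter in (-1, 0]\<close>

lemma gbinomial_shifted_eq_prod:
  "(real k + a) gchoose j = (\<Prod>i<j. real k + a - real j + 1 + real i) / fact j"
  by (simp add: gbinomial_pochhammer' pochhammer_prod atLeast0LessThan)

lemma gbinomial_shifted_pos:
  fixes a :: real
  assumes "-1 < a" "j \<le> k"
  shows "0 < (real k + a) gchoose j"
  unfolding gbinomial_shifted_eq_prod using assms by (intro divide_pos_pos prod_pos) auto

lemma gbinomial_shifted_le_binomial:
  fixes a :: real
  assumes "-1 < a" "a \<le> 0" "j \<le> k"
  shows "(real k + a) gchoose j \<le> real (k choose j)"
proof -
  have "real (k choose j) = (real k + 0) gchoose j"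
    by (simp add: binomial_gbinomial)
  then show ?thesis
    unfolding gbinomial_shifted_eq_prod using assms
    by (simp only:) (intro divide_right_mono prod_mono; auto)
qed

lemma gbinomial_shifted_le_pow2:
  fixes a :: real
  assumes "-1 < a" "a \<le> 0" "j \<le> k"
  shows "(real k + a) gchoose j \<le> 2 ^ k"
proof -
  have "(real k + a) gchoose j \<le> real (k choose j)"
    using assms by (rule gbinomial_shifted_le_binomial)
  also have "\<dots> \<le> 2 ^ k"
    using binomial_le_pow2[of k j] by (simp flip: of_nat_power)
  finally show ?thesis .
qed

lemma gbinomial_shifted_diag_ge:
  fixes a :: real
  assumes "-1/2 \<le> a"
  shows "(1/2) ^ k \<le> (real k + a) gchoose k"
proof -
  have "fact k = (\<Prod>i<k. 1 + real i)"
    by (simp add: pochhammer_fact pochhammer_prod atLeast0LessThan)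
  then have "(1/2) ^ k * fact k = (\<Prod>i<k. (1/2) * (1 + real i))"
    by (simp only: prod.distrib prod_constant card_lessThan)
  also have "\<dots> \<le> (\<Prod>i<k. a + 1 + real i)"
    using assms by (intro prod_mono) auto
  finally show ?thesis
    unfolding gbinomial_shifted_eq_prod by (simp add: field_simps)
qed

lemma sum_power_div_fact_le_exp:
  fixes y :: real
  assumes "0 \<le> y"
  shows "(\<Sum>i\<le>k. y ^ i / fact i) \<le> exp y"
proof -
  have s: "(\<lambda>i. y ^ i / fact i) sums exp y"
    using exp_converges[of y] by (simp add: field_simps)
  have "(\<Sum>i\<le>k. y ^ i / fact i) \<le> (\<Sum>i. y ^ i / fact i)"
    by (rule sum_le_suminf) (use s assms in \<open>auto simp: sums_iff\<close>)
  then show ?thesis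
    using s by (simp add: sums_iff)
qed

lemma gen_laguerre_at_0: "gen_laguerre k a 0 = complex_of_real ((real k + a) gchoose k)"
  unfolding gen_laguerre_def by (subst sum.remove[of _ 0]) (auto simp: power_0_left)

lemma norm_gen_laguerre_term_le:
  fixes a :: real
  assumes "-1 < a" "a \<le> 0" "i \<le> k"
  shows "norm (complex_of_real ((-1) ^ i * ((real k + a) gchoose (k - i)) / fact i) * x ^ i)
           \<le> 2 ^ k * (norm x ^ i / fact i)"
proof -
  have "norm (complex_of_real ((-1) ^ i * ((real k + a) gchoose (k - i)) / fact i) * x ^ i)
      = \<bar>(real k + a) gchoose (k - i)\<bar> * (norm x ^ i / fact i)"
    unfolding norm_mult norm_of_real norm_power by (simp add: abs_mult power_abs)
  also have "\<dots> \<le> 2 ^ k * (norm x ^ i / fact i)"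
    using assms gbinomial_shifted_pos[OF assms(1), of "k - i" k]
    by (intro mult_right_mono) (auto intro: gbinomial_shifted_le_pow2)
  finally show ?thesis .
qed

lemma norm_gen_laguerre_le:
  fixes a :: real
  assumes "-1 < a" "a \<le> 0"
  shows "norm (gen_laguerre k a x) \<le> 2 ^ k * exp (norm x)"
proof -
  have "norm (gen_laguerre k a x) \<le> (\<Sum>i\<le>k. 2 ^ k * (norm x ^ i / fact i))"
    unfolding gen_laguerre_def using assms
    by (intro order_trans[OF norm_sum] sum_mono norm_gen_laguerre_term_le) auto
  also have "\<dots> = 2 ^ k * (\<Sum>i\<le>k. norm x ^ i / fact i)"
    by (simp add: sum_distrib_left)
  also have "\<dots> \<le> 2 ^ k * exp (norm x)"
    by (intro mult_left_mono sum_power_div_fact_le_exp) auto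
  finally show ?thesis .
qed

lemma norm_gen_laguerre_sub_at_0_le:
  fixes a :: real
  assumes "-1 < a" "a \<le> 0" "norm x \<le> 1"
  shows "norm (gen_laguerre k a x - gen_laguerre k a 0) \<le> real k * 2 ^ k * norm x"
proof -
  define t where "t i = complex_of_real ((-1) ^ i * ((real k + a) gchoose (k - i)) / fact i) * x ^ i"
    for i
  have "gen_laguerre k a x - gen_laguerre k a 0 = (\<Sum>i\<in>{1..k}. t i)"
    unfolding gen_laguerre_def atMost_atLeast0
    by (simp add: sum.atLeast_Suc_atMost gen_laguerre_at_0 t_def)
  also have "norm \<dots> \<le> (\<Sum>i\<in>{1..k}. 2 ^ k * norm x)"
  proof (intro order_trans[OF norm_sum] sum_mono)
    fix i assume i: "i \<in> {1..k}"
    have "norm x ^ i / fact i \<le> norm x ^ i"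
      by (simp add: divide_le_eq mult_le_cancel_left1)
    also have "\<dots> \<le> norm x"
      using i assms(3) power_decreasing[of 1 i "norm x"] by simp
    finally have "2 ^ k * (norm x ^ i / fact i) \<le> 2 ^ k * norm x"
      by (rule mult_left_mono) simp
    then show "norm (t i) \<le> 2 ^ k * norm x"
      unfolding t_def using i assms(1,2) by (meson atLeastAtMost_iff norm_gen_laguerre_term_le order_trans)
  qed
  also have "\<dots> = real k * 2 ^ k * norm x"
    by simp
  finally show ?thesis .
qed

lemma gen_laguerre_neg_real_ge:
  fixes a s :: real
  assumes "-1 < a" "0 \<le> s"
  shows "(real k + a) gchoose k \<le> norm (gen_laguerre k a (- complex_of_real s))"
proof -
  define g where "g i = ((real k + a) gchoose (k - i)) * (s ^ i / fact i)" for i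
  have "gen_laguerre k a (- complex_of_real s) = complex_of_real (\<Sum>i\<le>k. g i)"
    unfolding gen_laguerre_def of_real_sum g_def
  proof (intro sum.cong refl)
    fix i
    have "(-1::complex) ^ i * (-1) ^ i = 1"
      by (simp flip: power_mult_distrib)
    then show "complex_of_real ((-1) ^ i * ((real k + a) gchoose (k - i)) / fact i) * (- complex_of_real s) ^ i
        = complex_of_real (((real k + a) gchoose (k - i)) * (s ^ i / fact i))"
      by (simp add: power_minus[of "complex_of_real s"] mult_ac)
  qed
  moreover have "(real k + a) gchoose k = g 0"
    by (simp add: g_def)
  moreover have "g 0 \<le> (\<Sum>i\<le>k. g i)"
  proof (rule member_le_sum)
    fix i assume "i \<in> {..k} - {0}"
    then have "0 < (real k + a) gchoose (k - i)"
      by (intro gbinomial_shifted_pos[OF assms(1)]) auto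
    then show "0 \<le> g i"
      using assms(2) by (simp add: g_def)
  qed auto
  ultimately show ?thesis
    by (metis abs_ge_self norm_of_real order_trans)
qed

lemma norm_gen_laguerre_near_0_ge:
  fixes a :: real
  assumes "-1/2 \<le> a" "a \<le> 0" "norm x \<le> (1/8) ^ k / 2"
  shows "(1/2) ^ (k+1) \<le> norm (gen_laguerre k a x)"
proof -
  have "(1/8::real) ^ k \<le> 1"
    by (rule power_le_one) auto
  then have "norm (gen_laguerre k a x - gen_laguerre k a 0) \<le> real k * 2 ^ k * norm x"
    using assms by (intro norm_gen_laguerre_sub_at_0_le) auto
  also have "\<dots> \<le> 2 ^ k * 2 ^ k * ((1/8) ^ k / 2)"
    using assms(3) less_exp[of k] by (intro mult_mono) auto
  also have "\<dots> = (1/2) ^ (k+1)"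
    by (simp flip: power_mult_distrib add: field_simps)
  finally have "norm (gen_laguerre k a x - gen_laguerre k a 0) \<le> (1/2) ^ (k+1)" .
  moreover have "(1/2) ^ k \<le> norm (gen_laguerre k a 0)"
    using gbinomial_shifted_diag_ge[OF assms(1), of k] by (simp add: gen_laguerre_at_0)
  moreover have "norm (gen_laguerre k a 0) \<le> norm (gen_laguerre k a x) + norm (gen_laguerre k a x - gen_laguerre k a 0)"
    by (metis norm_minus_commute norm_triangle_sub)
  ultimately show ?thesis
    by simp
qed

section \<open>The functions \<open>v_k\<close>\<close>

lemma vfun_parameter_bounds: "-1/2 \<le> -1 / real (2*n+2)" "-1 / real (2*n+2) \<le> (0::real)"
  by (auto simp: field_simps)

lemma vfun_holomorphic: "vfun n c k holomorphic_on UNIV"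
  unfolding vfun_def gen_laguerre_def by (intro holomorphic_intros) auto

lemma norm_vfun_le: "norm (vfun n c k z) \<le> \<bar>c k\<bar> * 2 ^ k * exp (2 * norm z ^ (2*n+2))"
proof -
  define m where "m = 2*n+2"
  let ?a = "-1 / real m"
  have "norm (exp (- (z ^ m) / of_nat m)) \<le> exp (norm (- (z ^ m) / of_nat m))"
    by (rule norm_exp)
  also have "norm (- (z ^ m) / of_nat m) = norm z ^ m / real m"
    by (simp only: norm_divide norm_minus_cancel norm_power norm_of_nat)
  also have "\<dots> \<le> norm z ^ m / 1"
    by (intro divide_left_mono) (auto simp: m_def)
  finally have exp_le: "norm (exp (- (z ^ m) / of_nat m)) \<le> exp (norm z ^ m)"
    by simp
  have "norm (gen_laguerre k ?a (z ^ m / of_nat (n+1))) \<le> 2 ^ k * exp (norm (z ^ m / of_nat (n+1)))"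
    using vfun_parameter_bounds unfolding m_def by (intro norm_gen_laguerre_le) auto
  also have "norm (z ^ m / of_nat (n+1)) = norm z ^ m / real (n+1)"
    by (simp only: norm_divide norm_power norm_of_nat)
  also have "\<dots> \<le> norm z ^ m / 1"
    by (intro divide_left_mono) auto
  finally have "norm (gen_laguerre k ?a (z ^ m / of_nat (n+1))) \<le> 2 ^ k * exp (norm z ^ m)"
    by simp
  then have "norm (vfun n c k z) \<le> \<bar>c k\<bar> * exp (norm z ^ m) * (2 ^ k * exp (norm z ^ m))"
    unfolding vfun_def m_def[symmetric] norm_mult norm_of_real using exp_le
    by (intro mult_mono) auto
  then show ?thesis
    unfolding m_def by (simp add: mult_ac flip: exp_add)
qed

lemma norm_vfun_on_ray_ge:
  assumes "0 \<le> r"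
  shows "\<bar>c k\<bar> * ((real k - 1 / real (2*n+2)) gchoose k) * exp (r ^ (2*n+2) / real (2*n+2))
           \<le> norm (vfun n c k (complex_of_real r * cis (pi / real (2*n+2))))"
proof -
  define m where "m = 2*n+2"
  let ?a = "-1 / real m"
  have "cis (pi / real m) ^ m = cis pi"
    unfolding Complex.DeMoivre by (simp add: m_def)
  then have pow: "(complex_of_real r * cis (pi / real m)) ^ m = - complex_of_real (r ^ m)"
    by (simp add: power_mult_distrib)
  have "(real k + ?a) gchoose k \<le> norm (gen_laguerre k ?a (- complex_of_real (r ^ m / real (n+1))))"
    using vfun_parameter_bounds assms unfolding m_def by (intro gen_laguerre_neg_real_ge) auto
  then have "\<bar>c k\<bar> * exp (r ^ m / real m) * ((real k + ?a) gchoose k)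
      \<le> \<bar>c k\<bar> * exp (r ^ m / real m) * norm (gen_laguerre k ?a (- complex_of_real (r ^ m / real (n+1))))"
    by (rule mult_left_mono) simp
  moreover have "norm (vfun n c k (complex_of_real r * cis (pi / real m)))
      = \<bar>c k\<bar> * exp (r ^ m / real m) * norm (gen_laguerre k ?a (- complex_of_real (r ^ m / real (n+1))))"
    unfolding vfun_def m_def[symmetric] pow norm_mult norm_of_real
    by (simp add: exp_of_real[symmetric] del: of_real_power)
  ultimately show ?thesis
    unfolding m_def[symmetric] by (simp add: mult_ac)
qed

lemma norm_vfun_near_0_ge:
  assumes "0 \<le> t" "t \<le> (1/8) ^ k / 2"
  shows "\<bar>c k\<bar> * (1/2) ^ (k+2) \<le> norm (vfun n c k (complex_of_real t))"
proof -
  define m where "m = 2*n+2"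
  let ?a = "-1 / real m"
  have "(1/8::real) ^ k \<le> 1"
    by (rule power_le_one) auto
  then have t_le: "t \<le> 1/2"
    using assms(2) by linarith
  have tm_le: "t ^ m \<le> t"
    using assms(1) t_le power_decreasing[of 1 m t] by (simp add: m_def)
  have "t ^ m / real (n+1) \<le> t ^ m / 1"
    using assms(1) by (intro divide_left_mono) auto
  moreover have "0 \<le> t ^ m / real (n+1)"
    using assms(1) by simp
  ultimately have "norm (complex_of_real (t ^ m / real (n+1))) \<le> (1/8) ^ k / 2"
    unfolding norm_of_real using assms(2) tm_le by linarith
  then have "(1/2) ^ (k+1) \<le> norm (gen_laguerre k ?a (complex_of_real (t ^ m / real (n+1))))"
    by (rule norm_gen_laguerre_near_0_ge[rotated 2]) (use vfun_parameter_bounds in \<open>auto simp: m_def\<close>)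
  moreover have "1/2 \<le> exp (- (t ^ m / real m))"
  proof -
    have "t ^ m / real m \<le> t ^ m / 1"
      using assms(1) by (intro divide_left_mono) (auto simp: m_def)
    then have "t ^ m / real m \<le> 1/2"
      using tm_le t_le by linarith
    then show ?thesis
      using exp_ge_add_one_self[of "- (t ^ m / real m)"] by linarith
  qed
  ultimately have "\<bar>c k\<bar> * (1/2) * (1/2) ^ (k+1)
      \<le> \<bar>c k\<bar> * exp (- (t ^ m / real m)) * norm (gen_laguerre k ?a (complex_of_real (t ^ m / real (n+1))))"
    by (intro mult_mono mult_left_mono) auto
  also have "\<dots> = norm (vfun n c k (complex_of_real t))"
    unfolding vfun_def m_def[symmetric] norm_mult norm_of_real
    by (simp add: exp_of_real[symmetric])
  finally show ?thesis
    by (simp add: mult_ac)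
qed

lemma has_integral_ge_interval_bound:
  fixes f :: "real \<Rightarrow> real"
  assumes "(f has_integral I) UNIV" "\<And>t. 0 \<le> f t" "\<alpha> \<le> \<beta>" "\<And>t. t \<in> {\<alpha>..\<beta>} \<Longrightarrow> G \<le> f t"
  shows "G * (\<beta> - \<alpha>) \<le> I"
proof -
  have "((\<lambda>t. G) has_integral G * (\<beta> - \<alpha>)) {\<alpha>..\<beta>}"
    using has_integral_const_real[of G \<alpha> \<beta>] assms(3) by (simp add: mult.commute)
  then have "((\<lambda>t. if t \<in> {\<alpha>..\<beta>} then G else 0) has_integral G * (\<beta> - \<alpha>)) UNIV"
    by (simp only: has_integral_restrict_UNIV)
  then show ?thesis
    by (rule has_integral_le[OF _ assms(1)]) (use assms(2,4) in auto)
qed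

lemma vfun_normalization_constant_le:
  assumes "((\<lambda>t::real. (norm (complex_of_real t ^ n * vfun n c k (complex_of_real t)))\<^sup>2) has_integral 1) UNIV"
  shows "\<bar>c k\<bar> \<le> (4 * 8 ^ (n+1)) ^ (k+1)"
proof -
  define \<delta> :: real where "\<delta> = (1/8) ^ (k+1)"
  have \<delta>: "0 < \<delta>" "\<delta> \<le> 1"
    unfolding \<delta>_def by (simp, rule power_le_one) auto
  define G where "G = (\<delta> ^ n * (\<bar>c k\<bar> * (1/2) ^ (k+2)))\<^sup>2"
  have "G * (2 * \<delta> - \<delta>) \<le> 1"
  proof (rule has_integral_ge_interval_bound[OF assms])
    fix t assume t: "t \<in> {\<delta>..2 * \<delta>}"
    have "\<delta> ^ n \<le> \<bar>t\<bar> ^ n"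
      using t \<delta> by (intro power_mono) auto
    moreover have "2 * \<delta> \<le> (1/8) ^ k / 2"
      by (simp add: \<delta>_def)
    then have "\<bar>c k\<bar> * (1/2) ^ (k+2) \<le> norm (vfun n c k (complex_of_real t))"
      using t \<delta> by (intro norm_vfun_near_0_ge) auto
    ultimately have "\<delta> ^ n * (\<bar>c k\<bar> * (1/2) ^ (k+2)) \<le> \<bar>t\<bar> ^ n * norm (vfun n c k (complex_of_real t))"
      by (rule mult_mono') (use \<delta> in simp_all)
    then show "G \<le> (norm (complex_of_real t ^ n * vfun n c k (complex_of_real t)))\<^sup>2"
      unfolding G_def norm_mult norm_power norm_of_real using \<delta> t by (intro power_mono) auto
  qed (use \<delta> in auto)
  then have "G * (2 * \<delta> - \<delta>) * \<delta> \<le> 1"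
    using \<delta> mult_mono[of "G * (2 * \<delta> - \<delta>)" 1 \<delta> 1] by simp
  moreover have "(\<bar>c k\<bar> * (1/2) ^ (k+2) * \<delta> ^ (n+1))\<^sup>2 = G * (2 * \<delta> - \<delta>) * \<delta>"
    unfolding G_def by (simp add: power2_eq_square mult_ac)
  ultimately have "(\<bar>c k\<bar> * (1/2) ^ (k+2) * \<delta> ^ (n+1))\<^sup>2 \<le> 1\<^sup>2"
    by simp
  then have "\<bar>c k\<bar> * (1/2) ^ (k+2) * \<delta> ^ (n+1) \<le> 1"
    by (rule power2_le_imp_le) simp
  then have "\<bar>c k\<bar> \<le> 2 ^ (k+2) * (8 ^ (k+1)) ^ (n+1)"
    unfolding \<delta>_def by (simp add: power_one_over field_simps)
  also have "\<dots> \<le> 4 ^ (k+1) * (8 ^ (n+1)) ^ (k+1)"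
  proof (rule mult_mono)
    have "(4::real) ^ (k+1) = 2 ^ (2 * (k+1))"
      by (simp add: power_mult)
    then show "(2::real) ^ (k+2) \<le> 4 ^ (k+1)"
      by (simp add: power_increasing)
    show "(8 ^ (k+1)) ^ (n+1) \<le> (8 ^ (n+1) :: real) ^ (k+1)"
      by (metis power_mult mult.commute order_refl)
  qed auto
  also have "\<dots> = (4 * 8 ^ (n+1)) ^ (k+1)"
    by (rule power_mult_distrib[symmetric])
  finally show ?thesis .
qed

lemma norm_vfun_le_uniform:
  assumes "((\<lambda>t::real. (norm (complex_of_real t ^ n * vfun n c k (complex_of_real t)))\<^sup>2) has_integral 1) UNIV"
  shows "norm (vfun n c k z) \<le> (8 ^ (n+2)) ^ (k+1) * exp (2 * norm z ^ (2*n+2))"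
proof -
  have "norm (vfun n c k z) \<le> \<bar>c k\<bar> * 2 ^ k * exp (2 * norm z ^ (2*n+2))"
    by (rule norm_vfun_le)
  also have "\<bar>c k\<bar> * 2 ^ k \<le> (4 * 8 ^ (n+1)) ^ (k+1) * 2 ^ (k+1)"
    using vfun_normalization_constant_le[OF assms] by (intro mult_mono) auto
  also have "\<dots> = (8 ^ (n+2)) ^ (k+1)"
    by (simp only: power_mult_distrib[symmetric]) simp
  finally show ?thesis
    by (simp add: mult_right_mono)
qed

lemma vfun_order_and_type:
  assumes "c k \<noteq> 0"
  shows "has_finite_order (vfun n c k) \<and> entire_order (vfun n c k) = real (2*n+2)
           \<and> has_finite_type (vfun n c k) (real (2*n+2))"
proof -
  define \<beta> where "\<beta> = \<bar>c k\<bar> * ((real k - 1 / real (2*n+2)) gchoose k)"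
  have powr_eq: "x powr real (2*n+2) = x ^ (2*n+2)" if "0 \<le> x" for x :: real
    using that by (rule powr_realpow') simp
  have "0 < (real k + -1 / real (2*n+2)) gchoose k"
    using vfun_parameter_bounds by (intro gbinomial_shifted_pos) auto
  then have \<beta>_pos: "0 < \<beta>"
    using assms by (simp add: \<beta>_def)
  have lower: "\<exists>z. R \<le> norm z \<and> \<beta> * exp (1 / real (2*n+2) * norm z powr real (2*n+2)) \<le> norm (vfun n c k z)"
    for R
  proof (intro exI conjI)
    let ?z = "complex_of_real (max R 0) * cis (pi / real (2*n+2))"
    have norm_z: "norm ?z = max R 0"
      by (simp add: norm_mult)
    then show "R \<le> norm ?z"
      by simp
    show "\<beta> * exp (1 / real (2*n+2) * norm ?z powr real (2*n+2)) \<le> norm (vfun n c k ?z)"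
      unfolding norm_z powr_eq[OF max.cobounded2] \<beta>_def
      using norm_vfun_on_ray_ge[of "max R 0" c k n] by simp
  qed
  have upper: "norm (vfun n c k z) \<le> \<bar>c k\<bar> * 2 ^ k * exp (2 * norm z powr real (2*n+2))" for z
    unfolding powr_eq[OF norm_ge_zero] by (rule norm_vfun_le)
  show ?thesis
    using assms by (intro order_and_type_of_growth_bounds[OF _ _ upper \<beta>_pos _ lower]) auto
qed

theorem proposition5p6:
  fixes n :: nat and c :: "nat \<Rightarrow> real"
  assumes cpos: "\<And>k. c k > 0"
    and normalized: "\<And>k. ((\<lambda>t::real. (norm (complex_of_real t ^ n * vfun n c k (complex_of_real t)))\<^sup>2)
                         has_integral 1) UNIV"
  shows "(\<forall>k. vfun n c k holomorphic_on UNIV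
             \<and> has_finite_order (vfun n c k)
             \<and> entire_order (vfun n c k) = real (2*n+2)
             \<and> has_finite_type (vfun n c k) (real (2*n+2)))
         \<and> (\<exists>c1>0. \<exists>C>0. \<forall>k z. norm (vfun n c k z) \<le> C ^ (k+1) * exp (c1 * norm z ^ (2*n+2)))"
proof -
  have "c k \<noteq> 0" for k
    using cpos[of k] by simp
  then have order_type: "\<forall>k. has_finite_order (vfun n c k) \<and> entire_order (vfun n c k) = real (2*n+2)
                               \<and> has_finite_type (vfun n c k) (real (2*n+2))"
    using vfun_order_and_type by blast
  have bound: "\<forall>k z. norm (vfun n c k z) \<le> (8 ^ (n+2)) ^ (k+1) * exp (2 * norm z ^ (2*n+2))"
    using norm_vfun_le_uniform[OF normalized] by blast
  have "(0::real) < 2" "(0::real) < 8 ^ (n+2)"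
    by simp_all
  then show ?thesis
    using vfun_holomorphic order_type bound by blast
qed

end
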